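(* Let $k_1,k_2\ge1$ be integers. The submodule $\mathcal{J}^{12}$ of $\mathcal{F}$ generated by $\{R_{12}^{n_1,n_2,n_3}:n_i\in\mathbb{Z}\}$ equals the submodule $\mathcal{J}^{12}_{\mathbb{R},[\frac{k_2}{2},\infty)}$ generated by $J^{12}_{\mathbb{R},[\frac{k_2}{2},\infty)}=\{R^{n_1,n_2,n_3}_{12}:n_1\in\mathbb{Z},\ n_2\in\mathbb{Z},\ n_2\ge k_2/2,\ n_3\ge 0\}$.
   Context: $\mathcal{F}$ is the free $\mathbb{Z}[A^{\pm1}]$-module with basis the symbols $s_1^{l_1}s_2^{l_2}s_3^{l_3}$, $l_i\ge 0$, extended multilinearly to integer exponents by $s_i^{-1}=0$ and $s_i^{n}=-s_i^{-n-2}$ for $n\le -2$. For $n_i\in\mathbb{Z}$, $R_{12}(n_1,n_2,n_3)=-A^{-n_1-n_2-2}s_1^{n_1}s_2^{n_2}s_3^{n_3}-A^{-n_1-n_2+2}s_1^{n_1-2}s_2^{n_2-2}s_3^{n_3}-A^{-n_1-n_2}s_1^{n_1-1}s_2^{n_2-1}s_3^{n_3+1}-A^{-n_1-n_2}s_1^{n_1-1}s_2^{n_2-1}s_3^{n_3-1}$ and $R_{12}^{n_1,n_2,n_3}=R_{12}(n_1,n_2,n_3)-R_{12}(-n_1+k_1,-n_2+k_2,n_3)$. *)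

theory Defs
  imports Main "HOL-Library.Poly_Mapping"
begin

(* An element of F = Z[A,A^-1]-module freely spanned by s1^l1 s2^l2 s3^l3 (l_i >= 0)
   is represented by its finitely supported coefficient function:
   (e,(l1,l2,l3)) |-> integer coefficient of A^e s1^l1 s2^l2 s3^l3. *)
type_synonym FF = "(int \<times> nat \<times> nat \<times> nat) \<Rightarrow>\<^sub>0 int"

lift_definition mulA :: "int \<Rightarrow> FF \<Rightarrow> FF"
  is "\<lambda>d f (e, m). f (e - d, m)"
proof -
  fix d :: int and f :: "int \<times> nat \<times> nat \<times> nat \<Rightarrow> int"
  assume fin: "finite {x. f x \<noteq> 0}"
  have "{x. (case x of (e, m) \<Rightarrow> f (e - d, m)) \<noteq> 0}
        = (\<lambda>(e, m). (e + d, m)) ` {x. f x \<noteq> 0}"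
    by (force simp: image_iff split: prod.splits)
  then show "finite {x. (case x of (e, m) \<Rightarrow> f (e - d, m)) \<noteq> 0}"
    using fin by simp
qed

inductive_set span_F :: "FF set \<Rightarrow> FF set" for S :: "FF set" where
  gen: "x \<in> S \<Longrightarrow> x \<in> span_F S"
| zero: "0 \<in> span_F S"
| add: "x \<in> span_F S \<Longrightarrow> y \<in> span_F S \<Longrightarrow> x + y \<in> span_F S"
| neg: "x \<in> span_F S \<Longrightarrow> - x \<in> span_F S"
| mulA: "x \<in> span_F S \<Longrightarrow> mulA d x \<in> span_F S"

(* extension of s^n to integer exponents: s^{-1} = 0, s^n = - s^{-n-2} for n <= -2 *)
definition red_exp :: "int \<Rightarrow> nat" where
  "red_exp n = (if n \<ge> 0 then nat n else nat (- n - 2))"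

definition sgn_exp :: "int \<Rightarrow> int" where
  "sgn_exp n = (if n \<ge> 0 then 1 else -1)"

definition Amono :: "int \<Rightarrow> int \<Rightarrow> int \<Rightarrow> int \<Rightarrow> FF" where
  "Amono e n1 n2 n3 =
     (if n1 = -1 \<or> n2 = -1 \<or> n3 = -1 then 0
      else Poly_Mapping.single (e, red_exp n1, red_exp n2, red_exp n3)
             (sgn_exp n1 * sgn_exp n2 * sgn_exp n3))"

definition R12 :: "int \<Rightarrow> int \<Rightarrow> int \<Rightarrow> FF" where
  "R12 n1 n2 n3 =
     - Amono (- n1 - n2 - 2) n1 n2 n3
     - Amono (- n1 - n2 + 2) (n1 - 2) (n2 - 2) n3
     - Amono (- n1 - n2) (n1 - 1) (n2 - 1) (n3 + 1)
     - Amono (- n1 - n2) (n1 - 1) (n2 - 1) (n3 - 1)"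

definition R12s :: "int \<Rightarrow> int \<Rightarrow> int \<Rightarrow> int \<Rightarrow> int \<Rightarrow> FF" where
  "R12s k1 k2 n1 n2 n3 = R12 n1 n2 n3 - R12 (- n1 + k1) (- n2 + k2) n3"

end

theory Submission
  imports Defs
begin

text \<open>Write \<open>R(n1,n2,n3)\<close> for the generator \<open>R12s k1 k2 n1 n2 n3\<close>. Directly from the
  definition, \<open>R(n1,n2,n3) = - R(k1 - n1, k2 - n2, n3)\<close>; and the convention
  \<open>s3^n = - s3^(-n-2)\<close> gives \<open>R(n1,n2,n3) = - R(n1,n2,-n3-2)\<close>, while \<open>s3^(-1) = 0\<close>
  kills the generators with \<open>n3 = -1\<close>. The first symmetry moves any generator, up to
  sign, into the range \<open>2 n2 \<ge> k2\<close>, the second into \<open>n3 \<ge> 0\<close>, so both generating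
  sets span the same submodule.\<close>

lemma span_F_minimal: "S \<subseteq> span_F T \<Longrightarrow> span_F S \<subseteq> span_F T"
proof
  show "x \<in> span_F T" if "S \<subseteq> span_F T" and "x \<in> span_F S" for x
    using that(2,1) by induction (auto intro: span_F.intros)
qed

lemma span_F_mono: "S \<subseteq> T \<Longrightarrow> span_F S \<subseteq> span_F T"
  by (rule span_F_minimal) (auto intro: span_F.gen)

lemma span_F_uminus_iff: "- x \<in> span_F S \<longleftrightarrow> x \<in> span_F S"
  by (metis minus_minus span_F.neg)

lemma Amono_reflect3: "Amono e n1 n2 n3 = - Amono e n1 n2 (- n3 - 2)"
  unfolding Amono_def red_exp_def sgn_exp_def
  by (auto simp: single_uminus[symmetric])

lemma R12_reflect3: "R12 n1 n2 n3 = - R12 n1 n2 (- n3 - 2)"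
proof -
  have "Amono e a b (n3 + 1) = - Amono e a b ((- n3 - 2) - 1)"
    and "Amono e a b (n3 - 1) = - Amono e a b ((- n3 - 2) + 1)" for e a b
    using Amono_reflect3[of e a b "n3 + 1"] Amono_reflect3[of e a b "n3 - 1"]
    by (simp_all add: algebra_simps)
  then show ?thesis
    unfolding R12_def Amono_reflect3[of _ _ _ n3] by (simp add: algebra_simps)
qed

lemma R12_neg1: "R12 n1 n2 (-1) = 0"
  unfolding R12_def Amono_def red_exp_def sgn_exp_def
  by (simp add: single_uminus)

lemma R12s_reflect3: "R12s k1 k2 n1 n2 n3 = - R12s k1 k2 n1 n2 (- n3 - 2)"
  unfolding R12s_def by (subst (1 2) R12_reflect3) simp

lemma R12s_neg1: "R12s k1 k2 n1 n2 (-1) = 0"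
  unfolding R12s_def by (simp add: R12_neg1)

lemma R12s_swap: "R12s k1 k2 n1 n2 n3 = - R12s k1 k2 (k1 - n1) (k2 - n2) n3"
  unfolding R12s_def by simp

theorem lemma4p1:
  fixes k1 k2 :: int
  assumes "k1 \<ge> 1" and "k2 \<ge> 1"
  shows "span_F {R12s k1 k2 n1 n2 n3 | n1 n2 n3. True}
       = span_F {R12s k1 k2 n1 n2 n3 | n1 n2 n3. 2 * n2 \<ge> k2 \<and> n3 \<ge> 0}"
    (is "span_F ?A = span_F ?B")
proof (rule subset_antisym)
  have nonneg: "R12s k1 k2 n1 n2 n3 \<in> span_F ?B" if "n3 \<ge> 0" for n1 n2 n3
  proof (cases "2 * n2 \<ge> k2")
    case True
    with that show ?thesis by (blast intro: span_F.gen)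
  next
    case False
    with that have "R12s k1 k2 (k1 - n1) (k2 - n2) n3 \<in> ?B" by force
    then show ?thesis
      by (subst R12s_swap) (simp add: span_F_uminus_iff span_F.gen)
  qed
  have "R12s k1 k2 n1 n2 n3 \<in> span_F ?B" for n1 n2 n3
  proof -
    consider "n3 \<ge> 0" | "n3 = -1" | "- n3 - 2 \<ge> 0" by linarith
    then show ?thesis
      by cases (use nonneg[of n3] nonneg[of "- n3 - 2"] in
        \<open>auto simp: R12s_neg1 span_F.zero span_F_uminus_iff R12s_reflect3[of _ _ _ _ n3]\<close>)
  qed
  then show "span_F ?A \<subseteq> span_F ?B" by (intro span_F_minimal) blast
  show "span_F ?B \<subseteq> span_F ?A" by (rule span_F_mono) blast
qed

end
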